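(* Let $d$ be a positive integer and $p\in[0,1]$. Then every cubic graph $G$ of girth at least $2d+1$ satisfies $$\gamma_e(G)\leq\frac{3}{2}\left(p+e^{-pd}\right)n(G).$$
   Context: All graphs are finite, simple and undirected; $n(G)=|V(G)|$; a graph is cubic if every vertex has degree $3$. For a graph $G$, a set $S\subseteq V(G)$, and vertices $u,v$ with $u\in S$ or $v\in S$, ${\rm dist}_{(G,S)}(u,v)$ is the minimum number of edges of a path $P$ in $G$ between $u$ and $v$ such that $S$ contains exactly one endvertex of $P$ and no internal vertex of $P$, and $\infty$ if no such path exists (so ${\rm dist}_{(G,S)}(u,u)=0$ for $u\in S$). For $u\in V(G)$, $w_{(G,S)}(u)=\sum_{v\in S}(1/2)^{{\rm dist}_{(G,S)}(u,v)-1}$ with $(1/2)^{\infty}=0$. $S$ is an exponential dominating set of $G$ if $w_{(G,S)}(u)\geq 1$ for every $u\in V(G)$, and $\gamma_e(G)$ is the minimum cardinality of an exponential dominating set of $G$. *)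

theory Defs
  imports Complex_Main "HOL-Library.Extended_Nat"
begin

definition simple_graph :: "'a set \<Rightarrow> ('a \<Rightarrow> 'a \<Rightarrow> bool) \<Rightarrow> bool" where
  "simple_graph V E \<longleftrightarrow> finite V \<and> (\<forall>x y. E x y \<longrightarrow> E y x) \<and> (\<forall>x. \<not> E x x)
     \<and> (\<forall>x y. E x y \<longrightarrow> x \<in> V \<and> y \<in> V)"

definition cubic :: "'a set \<Rightarrow> ('a \<Rightarrow> 'a \<Rightarrow> bool) \<Rightarrow> bool" where
  "cubic V E \<longleftrightarrow> (\<forall>v\<in>V. card {w \<in> V. E v w} = 3)"

definition is_path :: "'a set \<Rightarrow> ('a \<Rightarrow> 'a \<Rightarrow> bool) \<Rightarrow> 'a list \<Rightarrow> bool" where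
  "is_path V E P \<longleftrightarrow> P \<noteq> [] \<and> set P \<subseteq> V \<and> distinct P
     \<and> (\<forall>i. Suc i < length P \<longrightarrow> E (P ! i) (P ! Suc i))"

text \<open>A cycle is a list of at least 3 distinct vertices, consecutive ones adjacent,
and the last adjacent to the first; its length is the number of vertices (= edges).\<close>
definition is_cycle :: "'a set \<Rightarrow> ('a \<Rightarrow> 'a \<Rightarrow> bool) \<Rightarrow> 'a list \<Rightarrow> bool" where
  "is_cycle V E C \<longleftrightarrow> length C \<ge> 3 \<and> is_path V E C \<and> E (last C) (hd C)"

definition girth_ge :: "'a set \<Rightarrow> ('a \<Rightarrow> 'a \<Rightarrow> bool) \<Rightarrow> nat \<Rightarrow> bool" where
  "girth_ge V E g \<longleftrightarrow> (\<forall>C. is_cycle V E C \<longrightarrow> length C \<ge> g)"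

definition S_path :: "'a set \<Rightarrow> ('a \<Rightarrow> 'a \<Rightarrow> bool) \<Rightarrow> 'a set \<Rightarrow> 'a \<Rightarrow> 'a \<Rightarrow> 'a list \<Rightarrow> bool" where
  "S_path V E S u v P \<longleftrightarrow> is_path V E P \<and> hd P = u \<and> last P = v
     \<and> card ({hd P, last P} \<inter> S) = 1 \<and> set (butlast (tl P)) \<inter> S = {}"

definition dist_S :: "'a set \<Rightarrow> ('a \<Rightarrow> 'a \<Rightarrow> bool) \<Rightarrow> 'a set \<Rightarrow> 'a \<Rightarrow> 'a \<Rightarrow> enat" where
  "dist_S V E S u v = (INF P \<in> {P. S_path V E S u v P}. enat (length P - 1))"

definition weight_S :: "'a set \<Rightarrow> ('a \<Rightarrow> 'a \<Rightarrow> bool) \<Rightarrow> 'a set \<Rightarrow> 'a \<Rightarrow> real" where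
  "weight_S V E S u = (\<Sum>v\<in>S. (case dist_S V E S u v of
       enat k \<Rightarrow> (1/2::real) powi (int k - 1) | \<infinity> \<Rightarrow> 0))"

definition exp_dominating :: "'a set \<Rightarrow> ('a \<Rightarrow> 'a \<Rightarrow> bool) \<Rightarrow> 'a set \<Rightarrow> bool" where
  "exp_dominating V E S \<longleftrightarrow> S \<subseteq> V \<and> (\<forall>u\<in>V. weight_S V E S u \<ge> 1)"

definition gamma_e :: "'a set \<Rightarrow> ('a \<Rightarrow> 'a \<Rightarrow> bool) \<Rightarrow> nat" where
  "gamma_e V E = Min {card S | S. exp_dominating V E S}"

end

theory Submission
  imports Defs
begin

text \<open>Pick \<open>A \<subseteq> V\<close> at random, every vertex independently with probability \<open>p\<close>. Seen from a
  vertex \<open>u \<notin> A\<close>, let a non-backtracking walk start at \<open>u\<close> along one of its three edges and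
  continue uniformly at random for at most \<open>d\<close> steps, stopping when it enters \<open>A\<close>; the sum over
  the three starting edges of the probability of entering \<open>A\<close> is the local weight of \<open>A\<close> at \<open>u\<close>.
  As the girth exceeds \<open>2d\<close>, the stopped walks are paths ending in pairwise distinct vertices of
  \<open>A\<close>, and a stopped walk with \<open>k\<close> edges has probability \<open>2^(1-k)\<close>, which is at most the
  contribution of its endpoint to the exponential weight at \<open>u\<close>; so the local weight is a lower
  bound for that weight. A fixed walk of length \<open>d\<close> misses \<open>A\<close> with probability \<open>(1-p)^(d+1)\<close>,
  hence the expected deficit \<open>(3 - local weight)/2\<close> is at most \<open>3/2 (1-p)^(d+1)\<close>. Adding to \<open>A\<close>
  every vertex of local weight below 1, whose deficit is at least 1, gives an exponential
  dominating set of expected size at most \<open>pn + 3/2 (1-p)^(d+1) n \<le> 3/2 (p + e^(-pd)) n\<close>.\<close>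

section \<open>Bernoulli random subsets\<close>

definition bernoulli_weight :: "'a set \<Rightarrow> real \<Rightarrow> 'a set \<Rightarrow> real" where
  "bernoulli_weight V p A = p ^ card A * (1 - p) ^ card (V - A)"

lemma bernoulli_weight_nonneg: "0 \<le> p \<Longrightarrow> p \<le> 1 \<Longrightarrow> 0 \<le> bernoulli_weight V p A"
  unfolding bernoulli_weight_def by simp

lemma sum_bernoulli_weight_avoiding:
  assumes "finite V" and "T \<subseteq> V"
  shows "(\<Sum>A\<in>Pow V. bernoulli_weight V p A * of_bool (T \<inter> A = {})) = (1 - p) ^ card T"
proof -
  have "(1 - p) ^ card T = (\<Prod>x\<in>V. if x \<in> T then 1 - p else 1)"
    using prod.If_cases[OF \<open>finite V\<close>, of "\<lambda>x. x \<in> T" "\<lambda>_. 1 - p" "\<lambda>_. 1"]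
    by (simp add: Int_absorb1[OF \<open>T \<subseteq> V\<close>])
  also have "\<dots> = (\<Prod>x\<in>V. (if x \<in> T then 0 else p) + (1 - p))"
    by (intro prod.cong) auto
  also have "\<dots> = (\<Sum>A\<in>Pow V. (\<Prod>x\<in>A. if x \<in> T then 0 else p) * (\<Prod>x\<in>V - A. 1 - p))"
    by (rule prod_add[OF \<open>finite V\<close>])
  also have "\<dots> = (\<Sum>A\<in>Pow V. bernoulli_weight V p A * of_bool (T \<inter> A = {}))"
  proof (intro sum.cong refl)
    fix A assume "A \<in> Pow V"
    then have "finite A" using \<open>finite V\<close> finite_subset by auto
    show "(\<Prod>x\<in>A. if x \<in> T then 0 else p) * (\<Prod>x\<in>V - A. 1 - p)
        = bernoulli_weight V p A * of_bool (T \<inter> A = {})"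
    proof (cases "T \<inter> A = {}")
      case True
      then have "(\<Prod>x\<in>A. if x \<in> T then 0 else p) = (\<Prod>x\<in>A. p)"
        by (intro prod.cong) auto
      with True show ?thesis by (simp add: bernoulli_weight_def)
    qed (use \<open>finite A\<close> in \<open>auto simp: prod_zero\<close>)
  qed
  finally show ?thesis ..
qed

lemma sum_bernoulli_weight: "finite V \<Longrightarrow> (\<Sum>A\<in>Pow V. bernoulli_weight V p A) = 1"
  using sum_bernoulli_weight_avoiding[of V "{}" p] by simp

lemma sum_bernoulli_weight_member:
  assumes "finite V" and "u \<in> V"
  shows "(\<Sum>A\<in>Pow V. bernoulli_weight V p A * of_bool (u \<in> A)) = p"
proof -
  have "bernoulli_weight V p A * of_bool (u \<in> A)
      = bernoulli_weight V p A - bernoulli_weight V p A * of_bool ({u} \<inter> A = {})" for A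
    by simp
  then have "(\<Sum>A\<in>Pow V. bernoulli_weight V p A * of_bool (u \<in> A))
      = (\<Sum>A\<in>Pow V. bernoulli_weight V p A) - (\<Sum>A\<in>Pow V. bernoulli_weight V p A * of_bool ({u} \<inter> A = {}))"
    by (simp only: sum_subtractf)
  then show ?thesis
    using assms sum_bernoulli_weight sum_bernoulli_weight_avoiding[of V "{u}" p] by simp
qed

lemma sum_bernoulli_weight_card:
  assumes "finite V"
  shows "(\<Sum>A\<in>Pow V. bernoulli_weight V p A * real (card A)) = p * real (card V)"
proof -
  have "(\<Sum>A\<in>Pow V. bernoulli_weight V p A * real (card A))
      = (\<Sum>A\<in>Pow V. \<Sum>u\<in>V. bernoulli_weight V p A * of_bool (u \<in> A))"
  proof (intro sum.cong refl)
    fix A assume "A \<in> Pow V"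
    then have "real (card A) = (\<Sum>u\<in>V. of_bool (u \<in> A))"
      using assms by (simp add: sum.If_cases Int_absorb1 of_bool_def)
    then show "bernoulli_weight V p A * real (card A) = (\<Sum>u\<in>V. bernoulli_weight V p A * of_bool (u \<in> A))"
      by (simp add: sum_distrib_left)
  qed
  also have "\<dots> = (\<Sum>u\<in>V. \<Sum>A\<in>Pow V. bernoulli_weight V p A * of_bool (u \<in> A))"
    by (rule sum.swap)
  also have "\<dots> = (\<Sum>u\<in>V. p)"
    by (intro sum.cong refl sum_bernoulli_weight_member assms)
  finally show ?thesis by simp
qed

lemma exists_le_weighted_mean:
  fixes w f :: "'b \<Rightarrow> real"
  assumes "finite I" and "\<And>i. i \<in> I \<Longrightarrow> 0 \<le> w i" and "sum w I = 1"
  shows "\<exists>i\<in>I. f i \<le> (\<Sum>j\<in>I. w j * f j)"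
proof -
  have "I \<noteq> {}" using assms(3) by auto
  then have "Min (f ` I) \<in> f ` I" using \<open>finite I\<close> by simp
  then obtain i where "i \<in> I" and "f i = Min (f ` I)" by auto
  then have i: "i \<in> I" "\<And>j. j \<in> I \<Longrightarrow> f i \<le> f j" using \<open>finite I\<close> by auto
  have "f i = (\<Sum>j\<in>I. w j * f i)" using assms(3) by (simp flip: sum_distrib_right)
  also have "\<dots> \<le> (\<Sum>j\<in>I. w j * f j)"
    by (intro sum_mono mult_left_mono i assms(2))
  finally show ?thesis using i(1) by blast
qed

lemma one_minus_power_le_exp:
  assumes "0 \<le> p" and "p \<le> 1"
  shows "(1 - p) ^ n \<le> exp (- p * real n)"
proof -
  have "(1 - p) ^ n \<le> exp (- p) ^ n"
    using assms exp_ge_add_one_self[of "- p"] by (intro power_mono) auto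
  also have "\<dots> = exp (- p * real n)"
    by (simp add: exp_of_nat_mult[symmetric] mult.commute)
  finally show ?thesis .
qed

section \<open>Non-backtracking walks in graphs of large girth\<close>

lemma set_tl_subset: "set (tl xs) \<subseteq> set xs"
  by (cases xs) auto

locale girth_graph =
  fixes V :: "'a set" and E :: "'a \<Rightarrow> 'a \<Rightarrow> bool" and d :: nat
  assumes simple: "simple_graph V E" and girth: "girth_ge V E (2 * d + 1)"
begin

lemma finite_V: "finite V"
  using simple by (simp add: simple_graph_def)

lemma adj_sym: "E x y \<Longrightarrow> E y x"
  using simple by (simp add: simple_graph_def)

lemma adj_irrefl: "\<not> E x x"
  using simple by (simp add: simple_graph_def)

definition nb_walk :: "'a list \<Rightarrow> bool" where
  "nb_walk ws \<longleftrightarrow> set ws \<subseteq> V \<and> (\<forall>i. Suc i < length ws \<longrightarrow> E (ws ! i) (ws ! Suc i))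
     \<and> (\<forall>i. Suc (Suc i) < length ws \<longrightarrow> ws ! i \<noteq> ws ! Suc (Suc i))"

lemma nb_walk_tl: "nb_walk (x # ws) \<Longrightarrow> nb_walk ws"
  unfolding nb_walk_def by (auto simp del: nth_Cons_Suc)

lemma nb_walk_take: "nb_walk ws \<Longrightarrow> nb_walk (take n ws)"
  unfolding nb_walk_def by (auto dest: in_set_takeD)

lemma nb_walk_distinct:
  assumes "nb_walk ws" and "length ws \<le> 2 * d + 1"
  shows "distinct ws"
  using assms
proof (induction ws)
  case (Cons x ws)
  have "distinct ws" using Cons nb_walk_tl by simp
  show ?case
  proof (rule ccontr)
    assume "\<not> distinct (x # ws)"
    with \<open>distinct ws\<close> obtain k where k: "k < length ws" "ws ! k = x"
      by (auto simp: in_set_conv_nth)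
    obtain adj: "\<And>i. Suc i < length (x # ws) \<Longrightarrow> E ((x # ws) ! i) ((x # ws) ! Suc i)"
      and nb: "\<And>i. Suc (Suc i) < length (x # ws) \<Longrightarrow> (x # ws) ! i \<noteq> (x # ws) ! Suc (Suc i)"
      using Cons.prems(1) unfolding nb_walk_def by blast
    define C where "C = take (Suc k) (x # ws)"
    have "k \<noteq> 0"
    proof
      assume "k = 0"
      then show False using adj[of 0] k adj_irrefl by auto
    qed
    moreover have "k \<noteq> 1" using nb[of 0] k by auto
    ultimately have "length C \<ge> 3" using k by (simp add: C_def)
    moreover have "nb_walk C" unfolding C_def by (rule nb_walk_take[OF Cons.prems(1)])
    moreover have "distinct C"
      using \<open>distinct ws\<close> k by (auto simp: C_def in_set_conv_nth nth_eq_iff_index_eq)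
    moreover have "last C = (x # ws) ! k"
      unfolding C_def using k by (simp only: take_Suc_conv_app_nth[of k "x # ws"] last_snoc length_Cons Suc_less_eq)
    then have "E (last C) (hd C)"
      using adj[of k] k by (simp add: C_def)
    ultimately have "is_cycle V E C"
      unfolding is_cycle_def is_path_def nb_walk_def by auto
    then have "length C \<ge> 2 * d + 1" using girth unfolding girth_ge_def by blast
    then show False using k Cons.prems(2) by (simp add: C_def)
  qed
qed simp

lemma nb_walk_rev: "nb_walk ws \<Longrightarrow> nb_walk (rev ws)"
  unfolding nb_walk_def
proof (elim conjE, intro conjI allI impI)
  fix i
  assume adj: "\<forall>i. Suc i < length ws \<longrightarrow> E (ws ! i) (ws ! Suc i)" and i: "Suc i < length (rev ws)"
  define j where "j = length ws - Suc (Suc i)"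
  have "Suc j < length ws" and "Suc j = length ws - Suc i" using i by (auto simp: j_def)
  moreover from this have "E (ws ! j) (ws ! Suc j)" using adj by blast
  ultimately show "E (rev ws ! i) (rev ws ! Suc i)"
    using i by (auto simp: rev_nth j_def intro: adj_sym)
next
  fix i
  assume nb: "\<forall>i. Suc (Suc i) < length ws \<longrightarrow> ws ! i \<noteq> ws ! Suc (Suc i)"
    and i: "Suc (Suc i) < length (rev ws)"
  define j where "j = length ws - Suc (Suc (Suc i))"
  have "Suc (Suc j) < length ws" and "Suc (Suc j) = length ws - Suc i" using i by (auto simp: j_def)
  moreover from this have "ws ! j \<noteq> ws ! Suc (Suc j)" using nb by blast
  ultimately show "rev ws ! i \<noteq> rev ws ! Suc (Suc i)"
    using i by (auto simp: rev_nth j_def)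
qed simp

lemma nb_walk_glue:
  assumes "nb_walk (xs @ [x])" and "nb_walk (x # ys)"
    and "xs \<noteq> [] \<Longrightarrow> ys \<noteq> [] \<Longrightarrow> last xs \<noteq> hd ys"
  shows "nb_walk (xs @ x # ys)"
proof -
  let ?zs = "xs @ x # ys" and ?n = "length xs"
  have left: "?zs ! i = (xs @ [x]) ! i" if "i \<le> ?n" for i
    using that by (auto simp: nth_append)
  have right: "?zs ! i = (x # ys) ! (i - ?n)" if "?n \<le> i" for i
    using that by (simp add: nth_append)
  obtain L1: "\<And>i. Suc i < Suc ?n \<Longrightarrow> E ((xs @ [x]) ! i) ((xs @ [x]) ! Suc i)"
    and L2: "\<And>i. Suc (Suc i) < Suc ?n \<Longrightarrow> (xs @ [x]) ! i \<noteq> (xs @ [x]) ! Suc (Suc i)"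
    using assms(1) unfolding nb_walk_def by auto
  obtain R1: "\<And>i. Suc i < Suc (length ys) \<Longrightarrow> E ((x # ys) ! i) ((x # ys) ! Suc i)"
    and R2: "\<And>i. Suc (Suc i) < Suc (length ys) \<Longrightarrow> (x # ys) ! i \<noteq> (x # ys) ! Suc (Suc i)"
    using assms(2) unfolding nb_walk_def by auto
  show ?thesis unfolding nb_walk_def
  proof (intro conjI allI impI)
    show "set ?zs \<subseteq> V" using assms(1,2) unfolding nb_walk_def by auto
  next
    fix i assume i: "Suc i < length ?zs"
    show "E (?zs ! i) (?zs ! Suc i)"
    proof (cases "Suc i \<le> ?n")
      case True
      then show ?thesis using left[of i] left[of "Suc i"] L1[of i] by simp
    next
      case False
      then show ?thesis using right[of i] right[of "Suc i"] R1[of "i - ?n"] i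
        by (simp add: Suc_diff_le)
    qed
  next
    fix i assume i: "Suc (Suc i) < length ?zs"
    consider "Suc (Suc i) \<le> ?n" | "?n \<le> i" | "Suc i = ?n" by linarith
    then show "?zs ! i \<noteq> ?zs ! Suc (Suc i)"
    proof cases
      case 1
      then show ?thesis using left[of i] left[of "Suc (Suc i)"] L2[of i] by simp
    next
      case 2
      then show ?thesis using right[of i] right[of "Suc (Suc i)"] R2[of "i - ?n"] i
        by (simp add: Suc_diff_le)
    next
      case 3
      then have "xs \<noteq> []" and "ys \<noteq> []" using i by auto
      moreover have "?zs ! i = last xs" and "?zs ! Suc (Suc i) = hd ys"
        using 3 \<open>xs \<noteq> []\<close> \<open>ys \<noteq> []\<close> by (auto simp: nth_append last_conv_nth hd_conv_nth dest: sym)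
      ultimately show ?thesis using assms(3) by simp
    qed
  qed
qed

lemma nb_walk_unique:
  assumes "nb_walk P" and "nb_walk Q" and "P \<noteq> []" and "Q \<noteq> []"
    and "hd P = hd Q" and "last P = last Q" and "length P + length Q \<le> 2 * d + 2"
  shows "P = Q"
  using assms
proof (induction P arbitrary: Q)
  case (Cons x R)
  then obtain R' where Q: "Q = x # R'" by (cases Q) auto
  have "distinct (x # R)" using nb_walk_distinct[OF Cons.prems(1)] Cons.prems(7) Q by simp
  have "distinct (x # R')" using nb_walk_distinct[OF Cons.prems(2)] Cons.prems(7) Q by simp
  show ?case
  proof (cases "R = [] \<or> R' = []")
    case True
    have "R = [] \<longleftrightarrow> R' = []"
    proof
      assume "R = []"
      then have "last (x # R') = x" using Cons.prems(6) Q by simp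
      then show "R' = []" using \<open>distinct (x # R')\<close> last_in_set[of R'] by (cases R') auto
    next
      assume "R' = []"
      then have "last (x # R) = x" using Cons.prems(6) Q by simp
      then show "R = []" using \<open>distinct (x # R)\<close> last_in_set[of R] by (cases R) auto
    qed
    with True show ?thesis using Q by simp
  next
    case False
    then have "R \<noteq> []" and "R' \<noteq> []" by auto
    show ?thesis
    proof (cases "hd R = hd R'")
      case True
      then have "R = R'" using Cons.IH[of R'] Cons.prems \<open>R \<noteq> []\<close> \<open>R' \<noteq> []\<close> Q nb_walk_tl by simp
      then show ?thesis using Q by simp
    next
      case False
      \<comment> \<open>The walks branch at \<open>x\<close>; glued there they form a short closed non-backtracking walk.\<close>
      have "nb_walk (rev R' @ [x])" using nb_walk_rev[OF Cons.prems(2)] Q by simp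
      moreover have "last (rev R') \<noteq> hd R" using False \<open>R' \<noteq> []\<close> by (simp add: last_rev)
      ultimately have "nb_walk (rev R' @ x # R)" using nb_walk_glue Cons.prems(1) by blast
      then have "distinct (rev R' @ x # R)"
        using Cons.prems(7) Q by (intro nb_walk_distinct) auto
      moreover have "last R' = last R" using Cons.prems(6) Q \<open>R \<noteq> []\<close> \<open>R' \<noteq> []\<close> by simp
      ultimately show ?thesis using last_in_set[OF \<open>R \<noteq> []\<close>] last_in_set[OF \<open>R' \<noteq> []\<close>] by auto
    qed
  qed
qed simp

end

section \<open>Exponential weights\<close>

definition decay :: "enat \<Rightarrow> real" where
  "decay k = (case k of enat k \<Rightarrow> (1/2) powi (int k - 1) | \<infinity> \<Rightarrow> 0)"

lemma weight_S_decay: "weight_S V E S u = (\<Sum>v\<in>S. decay (dist_S V E S u v))"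
  unfolding weight_S_def decay_def ..

lemma decay_enat_Suc: "decay (enat (Suc k)) = (1/2) ^ k"
  by (simp add: decay_def)

lemma decay_nonneg: "0 \<le> decay k"
  by (cases k) (simp_all add: decay_def)

lemma decay_antimono:
  assumes "k \<le> l"
  shows "decay l \<le> decay k"
proof (cases l)
  case (enat b)
  then obtain a where "k = enat a" and "a \<le> b" using assms by (cases k) auto
  then show ?thesis using enat by (simp add: decay_def power_int_decreasing)
qed (use decay_nonneg[of k] in \<open>simp add: decay_def[of \<infinity>]\<close>)

lemma decay_dist_S_ge:
  assumes "S_path V E S u v P"
  shows "decay (enat (length P - 1)) \<le> decay (dist_S V E S u v)"
proof (rule decay_antimono)
  show "dist_S V E S u v \<le> enat (length P - 1)"
    unfolding dist_S_def using assms by (auto intro: INF_lower)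
qed

lemma weight_S_ge_2_if_mem:
  assumes "finite S" and "u \<in> S" and "u \<in> V"
  shows "2 \<le> weight_S V E S u"
proof -
  have "S_path V E S u u [u]" using assms by (simp add: S_path_def is_path_def)
  then have "2 \<le> decay (dist_S V E S u u)" using decay_dist_S_ge by (fastforce simp: decay_def)
  also have "\<dots> \<le> weight_S V E S u"
    unfolding weight_S_decay using assms by (intro member_le_sum decay_nonneg)
  finally show ?thesis .
qed

lemma gamma_e_le_card:
  assumes "finite V" and "exp_dominating V E S"
  shows "gamma_e V E \<le> card S"
proof -
  have "{card S | S. exp_dominating V E S} \<subseteq> card ` Pow V"
    unfolding exp_dominating_def by blast
  then have "finite {card S | S. exp_dominating V E S}"
    using assms(1) finite_subset by blast
  then show ?thesis unfolding gamma_e_def using assms(2) by (blast intro: Min_le)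
qed

section \<open>Random non-backtracking walks in cubic graphs\<close>

locale cubic_girth_graph = girth_graph +
  assumes cubic: "cubic V E"
begin

definition neighbours :: "'a \<Rightarrow> 'a set" where
  "neighbours x = {y \<in> V. E x y}"

text \<open>Walks are stored backwards: \<open>hd ws\<close> is the current end and \<open>hd (tl ws)\<close> the vertex
  visited just before it.\<close>

definition successors :: "'a list \<Rightarrow> 'a set" where
  "successors ws = {y \<in> V. E (hd ws) y \<and> y \<noteq> hd (tl ws)}"

lemma finite_neighbours: "finite (neighbours x)"
  using finite_V by (simp add: neighbours_def)

lemma finite_successors: "finite (successors ws)"
  using finite_V by (simp add: successors_def)

lemma card_neighbours: "x \<in> V \<Longrightarrow> card (neighbours x) = 3"
  using cubic by (simp add: cubic_def neighbours_def)

lemma nb_walk_start: "w \<in> neighbours u \<Longrightarrow> nb_walk [w, u]"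
  unfolding nb_walk_def neighbours_def using simple
  by (auto simp: less_Suc_eq nth_Cons' simple_graph_def)

lemma card_successors:
  assumes "nb_walk ws" and "2 \<le> length ws"
  shows "card (successors ws) = 2"
proof -
  obtain a b r where ws: "ws = a # b # r"
    using assms(2) by (metis Suc_le_length_iff numeral_2_eq_2)
  then have "a \<in> V" and "b \<in> neighbours a"
    using assms(1) by (auto simp: nb_walk_def neighbours_def)
  moreover have "successors ws = neighbours a - {b}"
    by (auto simp: successors_def neighbours_def ws)
  ultimately show ?thesis by (simp add: card_neighbours finite_neighbours)
qed

lemma nb_walk_Cons_successor:
  assumes "nb_walk ws" and "2 \<le> length ws" and "y \<in> successors ws"
  shows "nb_walk (y # ws)"
proof -
  obtain a b r where ws: "ws = a # b # r"
    using assms(2) by (metis Suc_le_length_iff numeral_2_eq_2)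
  have "y \<in> V" and "E y a" and "y \<noteq> b"
    using assms(3) adj_sym by (auto simp: successors_def ws)
  show ?thesis
    unfolding nb_walk_def ws
  proof (intro conjI allI impI)
    show "set (y # a # b # r) \<subseteq> V" using \<open>y \<in> V\<close> assms(1) by (simp add: nb_walk_def ws)
  next
    fix i
    show "Suc i < length (y # a # b # r) \<Longrightarrow> E ((y # a # b # r) ! i) ((y # a # b # r) ! Suc i)"
      using assms(1) \<open>E y a\<close> by (cases i) (auto simp: nb_walk_def ws)
    show "Suc (Suc i) < length (y # a # b # r) \<Longrightarrow> (y # a # b # r) ! i \<noteq> (y # a # b # r) ! Suc (Suc i)"
      using assms(1) \<open>y \<noteq> b\<close> by (cases i) (auto simp: nb_walk_def ws)
  qed
qed

text \<open>\<open>hit_weight k S ws\<close> is the probability that a uniformly random non-backtracking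
  continuation of \<open>ws\<close> by at most \<open>k\<close> steps, stopped on entering \<open>S\<close>, meets \<open>S\<close>;
  \<open>first_hits k S ws\<close> is the set of the stopped continuations that do.\<close>

primrec hit_weight :: "nat \<Rightarrow> 'a set \<Rightarrow> 'a list \<Rightarrow> real" where
  "hit_weight 0 S ws = of_bool (hd ws \<in> S)"
| "hit_weight (Suc k) S ws =
     (if hd ws \<in> S then 1 else (\<Sum>y\<in>successors ws. hit_weight k S (y # ws)) / 2)"

primrec first_hits :: "nat \<Rightarrow> 'a set \<Rightarrow> 'a list \<Rightarrow> 'a list set" where
  "first_hits 0 S ws = (if hd ws \<in> S then {ws} else {})"
| "first_hits (Suc k) S ws =
     (if hd ws \<in> S then {ws} else (\<Union>y\<in>successors ws. first_hits k S (y # ws)))"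

lemma hit_weight_bounds:
  "nb_walk ws \<Longrightarrow> 2 \<le> length ws \<Longrightarrow> 0 \<le> hit_weight k S ws \<and> hit_weight k S ws \<le> 1"
proof (induction k arbitrary: ws)
  case (Suc k)
  have "(\<Sum>y\<in>successors ws. hit_weight k S (y # ws)) \<le> of_nat (card (successors ws)) * 1"
    using Suc nb_walk_Cons_successor by (intro sum_bounded_above) auto
  moreover have "0 \<le> (\<Sum>y\<in>successors ws. hit_weight k S (y # ws))"
    using Suc nb_walk_Cons_successor by (intro sum_nonneg) auto
  ultimately show ?case using card_successors[OF Suc.prems] by simp
qed simp

lemma hit_weight_mono:
  "nb_walk ws \<Longrightarrow> 2 \<le> length ws \<Longrightarrow> A \<subseteq> S \<Longrightarrow> hit_weight k A ws \<le> hit_weight k S ws"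
proof (induction k arbitrary: ws)
  case (Suc k)
  show ?case
  proof (cases "hd ws \<in> S")
    case True
    then show ?thesis using hit_weight_bounds[OF Suc.prems(1,2), of "Suc k" A] by simp
  next
    case False
    have "(\<Sum>y\<in>successors ws. hit_weight k A (y # ws)) \<le> (\<Sum>y\<in>successors ws. hit_weight k S (y # ws))"
      using Suc nb_walk_Cons_successor by (intro sum_mono) auto
    then show ?thesis using False Suc.prems(3) by auto
  qed
qed auto

lemma finite_first_hits: "finite (first_hits k S ws)"
  by (induction k arbitrary: ws) (auto simp: finite_successors)

lemma first_hits_extend: "P \<in> first_hits k S ws \<Longrightarrow> \<exists>zs. P = zs @ ws \<and> length zs \<le> k"
proof (induction k arbitrary: ws)
  case (Suc k)
  show ?case
  proof (cases "hd ws \<in> S")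
    case False
    then obtain y where "P \<in> first_hits k S (y # ws)" using Suc.prems by auto
    then obtain zs where "P = zs @ y # ws" and "length zs \<le> k" using Suc.IH by blast
    then show ?thesis by (intro exI[of _ "zs @ [y]"]) auto
  qed (use Suc.prems in auto)
qed (auto split: if_splits)

lemma first_hits_disjoint:
  assumes "x \<noteq> y"
  shows "first_hits k S (x # ws) \<inter> first_hits l S (y # ws) = {}"
proof (rule ccontr)
  assume "first_hits k S (x # ws) \<inter> first_hits l S (y # ws) \<noteq> {}"
  then obtain zs zs' where eq: "zs @ x # ws = zs' @ y # ws"
    by (metis disjoint_iff first_hits_extend)
  then have "length zs = length zs'" using arg_cong[OF eq, of length] by simp
  then show False using eq assms by simp
qed

lemma first_hits_hit:
  "P \<in> first_hits k S ws \<Longrightarrow> hd P \<in> S \<and> set (tl P) \<inter> S \<subseteq> set (tl ws)"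
proof (induction k arbitrary: ws)
  case (Suc k)
  show ?case
  proof (cases "hd ws \<in> S")
    case False
    then obtain y where "P \<in> first_hits k S (y # ws)" using Suc.prems by auto
    from Suc.IH[OF this] have "hd P \<in> S" and "set (tl P) \<inter> S \<subseteq> set ws" by auto
    moreover have "set ws \<subseteq> insert (hd ws) (set (tl ws))" by (cases ws) auto
    ultimately show ?thesis using False by blast
  qed (use Suc.prems in auto)
qed (auto split: if_splits)

lemma first_hits_nb_walk:
  "nb_walk ws \<Longrightarrow> 2 \<le> length ws \<Longrightarrow> P \<in> first_hits k S ws \<Longrightarrow> nb_walk P"
proof (induction k arbitrary: ws)
  case (Suc k)
  show ?case
  proof (cases "hd ws \<in> S")
    case False
    then obtain y where "y \<in> successors ws" and "P \<in> first_hits k S (y # ws)" using Suc.prems by auto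
    then show ?thesis using Suc.IH[of "y # ws"] Suc.prems(2) nb_walk_Cons_successor[OF Suc.prems(1,2)] by simp
  qed (use Suc.prems in auto)
qed (auto split: if_splits)

lemma hit_weight_eq_sum_first_hits:
  "hit_weight k S ws = (\<Sum>P\<in>first_hits k S ws. (1/2) ^ (length P - length ws))"
proof (induction k arbitrary: ws)
  case (Suc k)
  show ?case
  proof (cases "hd ws \<in> S")
    case False
    have shift: "(1/2::real) ^ (length P - Suc (length ws)) / 2 = (1/2) ^ (length P - length ws)"
      if "P \<in> first_hits k S (y # ws)" for y P
      using first_hits_extend[OF that] by auto
    have "hit_weight (Suc k) S ws
        = (\<Sum>y\<in>successors ws. \<Sum>P\<in>first_hits k S (y # ws). (1/2) ^ (length P - length ws))"
      using False by (simp add: Suc.IH sum_divide_distrib shift cong: sum.cong)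
    also have "\<dots> = (\<Sum>P\<in>(\<Union>y\<in>successors ws. first_hits k S (y # ws)). (1/2) ^ (length P - length ws))"
      by (intro sum.UNION_disjoint[symmetric] finite_successors finite_first_hits ballI impI
          first_hits_disjoint)
    finally show ?thesis using False by simp
  qed simp
qed simp

definition local_weight :: "nat \<Rightarrow> 'a set \<Rightarrow> 'a \<Rightarrow> real" where
  "local_weight k S u = (\<Sum>w\<in>neighbours u. hit_weight k S [w, u])"

lemma local_weight_le_3: "u \<in> V \<Longrightarrow> local_weight k S u \<le> 3"
proof -
  assume "u \<in> V"
  have "local_weight k S u \<le> of_nat (card (neighbours u)) * 1"
    unfolding local_weight_def
    by (intro sum_bounded_above) (use hit_weight_bounds nb_walk_start in fastforce)
  then show ?thesis using card_neighbours[OF \<open>u \<in> V\<close>] by simp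
qed

lemma local_weight_mono: "A \<subseteq> S \<Longrightarrow> local_weight k A u \<le> local_weight k S u"
  unfolding local_weight_def by (intro sum_mono hit_weight_mono nb_walk_start) auto

lemma first_hits_from_edge:
  assumes "w \<in> neighbours u" and "P \<in> first_hits k S [w, u]"
  shows "nb_walk P" and "last P = u" and "2 \<le> length P" and "length P \<le> k + 2"
proof -
  show "nb_walk P" using first_hits_nb_walk[OF nb_walk_start[OF assms(1)] _ assms(2)] by simp
  obtain zs where "P = zs @ [w, u]" and "length zs \<le> k" using first_hits_extend[OF assms(2)] by blast
  then show "last P = u" and "2 \<le> length P" and "length P \<le> k + 2" by simp_all
qed

lemma first_hits_S_path:
  assumes "Suc k \<le> d" and "u \<notin> S" and "w \<in> neighbours u" and "P \<in> first_hits k S [w, u]"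
  shows "S_path V E S u (hd P) (rev P)"
proof -
  note P = first_hits_from_edge[OF assms(3,4)]
  have "distinct P" using nb_walk_distinct P assms(1) by simp
  then have "is_path V E (rev P)"
    using nb_walk_rev[OF P(1)] P(3) unfolding is_path_def nb_walk_def by auto
  moreover have "hd (rev P) = u" and "last (rev P) = hd P" using P(2,3) by (auto simp: hd_rev last_rev)
  moreover have "hd P \<in> S" and "set (tl P) \<inter> S \<subseteq> {u}"
    using first_hits_hit[OF assms(4)] by auto
  moreover have "set (butlast (tl (rev P))) \<subseteq> set (tl P)"
    using set_tl_subset[of "rev (tl P)"] by (simp add: butlast_tl)
  moreover have "{u, hd P} \<inter> S = {hd P}" using \<open>hd P \<in> S\<close> assms(2) by auto
  ultimately show ?thesis unfolding S_path_def using assms(2) by auto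
qed

lemma local_weight_eq_sum_first_hits:
  "local_weight k S u = (\<Sum>P\<in>(\<Union>w\<in>neighbours u. first_hits k S [w, u]). (1/2) ^ (length P - 2))"
proof -
  have "local_weight k S u = (\<Sum>w\<in>neighbours u. \<Sum>P\<in>first_hits k S [w, u]. (1/2) ^ (length P - 2))"
    by (simp add: local_weight_def hit_weight_eq_sum_first_hits numeral_2_eq_2)
  also have "\<dots> = (\<Sum>P\<in>(\<Union>w\<in>neighbours u. first_hits k S [w, u]). (1/2) ^ (length P - 2))"
    by (rule sum.UNION_disjoint[symmetric])
      (auto simp: finite_neighbours finite_first_hits first_hits_disjoint)
  finally show ?thesis .
qed

lemma local_weight_le_weight_S:
  assumes "Suc k \<le> d" and "u \<in> V" and "u \<notin> S" and "S \<subseteq> V"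
  shows "local_weight k S u \<le> weight_S V E S u"
proof -
  define F where "F = (\<Union>w\<in>neighbours u. first_hits k S [w, u])"
  have "inj_on hd F"
  proof (rule inj_onI)
    fix P Q assume "P \<in> F" and "Q \<in> F" and "hd P = hd Q"
    then obtain w w' where w: "w \<in> neighbours u" "P \<in> first_hits k S [w, u]"
      and w': "w' \<in> neighbours u" "Q \<in> first_hits k S [w', u]"
      unfolding F_def by blast
    show "P = Q"
      using first_hits_from_edge[OF w] first_hits_from_edge[OF w'] assms(1) \<open>hd P = hd Q\<close>
      by (intro nb_walk_unique) auto
  qed
  have "local_weight k S u = (\<Sum>P\<in>F. decay (enat (length (rev P) - 1)))"
    unfolding local_weight_eq_sum_first_hits F_def
    by (intro sum.cong refl)
      (auto dest!: first_hits_from_edge(3) simp: decay_enat_Suc[symmetric] numeral_2_eq_2 Suc_diff_Suc)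
  also have "\<dots> \<le> (\<Sum>P\<in>F. decay (dist_S V E S u (hd P)))"
    unfolding F_def using assms(1,3) first_hits_S_path by (intro sum_mono decay_dist_S_ge) blast
  also have "\<dots> = (\<Sum>v\<in>hd ` F. decay (dist_S V E S u v))"
    using sum.reindex[OF \<open>inj_on hd F\<close>, of "\<lambda>v. decay (dist_S V E S u v)"] by (simp add: comp_def)
  also have "\<dots> \<le> (\<Sum>v\<in>S. decay (dist_S V E S u v))"
  proof (rule sum_mono2)
    show "finite S" using assms(4) finite_V finite_subset by blast
    show "hd ` F \<subseteq> S" unfolding F_def using first_hits_hit by blast
  qed (rule decay_nonneg)
  finally show ?thesis by (simp add: weight_S_decay)
qed

section \<open>The expected cost of a random set\<close>

text \<open>For fixed \<open>A\<close>, the factor after \<open>bernoulli_weight\<close> is the probability that neither \<open>ws\<close>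
  nor its random continuation meets \<open>A\<close>. Each of the equally likely full continuations is a path on \<open>length ws + k\<close>
  vertices, which avoids \<open>A\<close> with probability \<open>(1 - p) ^ (length ws + k)\<close>.\<close>

lemma expected_miss_le:
  assumes "nb_walk ws" and "2 \<le> length ws" and "length ws + k \<le> 2 * d + 1"
  shows "(\<Sum>A\<in>Pow V. bernoulli_weight V p A *
      (if set (tl ws) \<inter> A = {} then 1 - hit_weight k A ws else 0)) \<le> (1 - p) ^ (length ws + k)"
  using assms
proof (induction k arbitrary: ws)
  case 0
  have "distinct ws" and "set ws \<subseteq> V"
    using 0 nb_walk_distinct by (auto simp: nb_walk_def)
  have "(if set (tl ws) \<inter> A = {} then 1 - hit_weight 0 A ws else 0) = of_bool (set ws \<inter> A = {})" for A
    using \<open>2 \<le> length ws\<close> by (cases ws) auto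
  then have "(\<Sum>A\<in>Pow V. bernoulli_weight V p A *
      (if set (tl ws) \<inter> A = {} then 1 - hit_weight 0 A ws else 0)) = (1 - p) ^ card (set ws)"
    using sum_bernoulli_weight_avoiding[OF finite_V \<open>set ws \<subseteq> V\<close>] by simp
  then show ?case using distinct_card[OF \<open>distinct ws\<close>] by simp
next
  case (Suc k)
  let ?miss = "\<lambda>k A ws. if set (tl ws) \<inter> A = {} then 1 - hit_weight k A ws else 0"
  have two: "card (successors ws) = 2" using card_successors Suc.prems by blast
  have step: "?miss (Suc k) A ws = (\<Sum>y\<in>successors ws. ?miss k A (y # ws)) / 2" for A
  proof (cases "set ws \<inter> A = {}")
    case True
    moreover have "set ws = insert (hd ws) (set (tl ws))" using Suc.prems(2) by (cases ws) auto
    moreover have "(\<Sum>y\<in>successors ws. 1 - hit_weight k A (y # ws))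
        = 2 - (\<Sum>y\<in>successors ws. hit_weight k A (y # ws))"
      using two by (simp add: sum_subtractf)
    ultimately show ?thesis by auto
  next
    case False
    then show ?thesis using Suc.prems(2) by (cases ws) auto
  qed
  have "(\<Sum>A\<in>Pow V. bernoulli_weight V p A * ?miss (Suc k) A ws)
      = (\<Sum>y\<in>successors ws. \<Sum>A\<in>Pow V. bernoulli_weight V p A * ?miss k A (y # ws)) / 2"
    by (simp add: step sum_distrib_left sum_divide_distrib[symmetric] sum.swap[of _ "successors ws"])
  also have "\<dots> \<le> (\<Sum>y\<in>successors ws. (1 - p) ^ (length (y # ws) + k)) / 2"
  proof (intro divide_right_mono sum_mono)
    fix y assume "y \<in> successors ws"
    then show "(\<Sum>A\<in>Pow V. bernoulli_weight V p A * ?miss k A (y # ws)) \<le> (1 - p) ^ (length (y # ws) + k)"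
      using Suc.IH[of "y # ws"] nb_walk_Cons_successor[OF Suc.prems(1,2)] Suc.prems(2,3) by simp
  qed simp
  also have "\<dots> = (1 - p) ^ (length ws + Suc k)" using two by simp
  finally show ?case .
qed

definition deficit :: "nat \<Rightarrow> 'a set \<Rightarrow> 'a \<Rightarrow> real" where
  "deficit k A u = (if u \<in> A then 0 else (3 - local_weight k A u) / 2)"

lemma deficit_nonneg: "u \<in> V \<Longrightarrow> 0 \<le> deficit k A u"
  using local_weight_le_3 by (simp add: deficit_def)

lemma expected_deficit_le:
  assumes "Suc k \<le> d" and "u \<in> V"
  shows "(\<Sum>A\<in>Pow V. bernoulli_weight V p A * deficit k A u) \<le> 3 / 2 * (1 - p) ^ (k + 2)"
proof -
  let ?miss = "\<lambda>A w. if set (tl [w, u]) \<inter> A = {} then 1 - hit_weight k A [w, u] else 0"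
  have "deficit k A u = (\<Sum>w\<in>neighbours u. ?miss A w) / 2" for A
    using card_neighbours[OF assms(2)] by (simp add: deficit_def local_weight_def sum_subtractf)
  then have "(\<Sum>A\<in>Pow V. bernoulli_weight V p A * deficit k A u)
      = (\<Sum>A\<in>Pow V. \<Sum>w\<in>neighbours u. bernoulli_weight V p A * ?miss A w) / 2"
    by (simp add: sum_distrib_left sum_divide_distrib)
  also have "\<dots> = (\<Sum>w\<in>neighbours u. \<Sum>A\<in>Pow V. bernoulli_weight V p A * ?miss A w) / 2"
    by (subst sum.swap) (rule refl)
  also have "\<dots> \<le> (\<Sum>w\<in>neighbours u. (1 - p) ^ (length [w, u] + k)) / 2"
    using assms(1) by (intro divide_right_mono sum_mono expected_miss_le nb_walk_start) auto
  also have "\<dots> = 3 / 2 * (1 - p) ^ (k + 2)" using card_neighbours[OF assms(2)] by simp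
  finally show ?thesis .
qed

lemma exists_cheap_set:
  assumes "0 \<le> p" and "p \<le> 1" and "Suc k \<le> d"
  shows "\<exists>A\<in>Pow V. real (card A) + (\<Sum>u\<in>V. deficit k A u)
      \<le> p * real (card V) + 3 / 2 * real (card V) * (1 - p) ^ (k + 2)"
proof -
  have "(\<Sum>A\<in>Pow V. bernoulli_weight V p A * (real (card A) + (\<Sum>u\<in>V. deficit k A u)))
      = (\<Sum>A\<in>Pow V. bernoulli_weight V p A * real (card A))
        + (\<Sum>u\<in>V. \<Sum>A\<in>Pow V. bernoulli_weight V p A * deficit k A u)"
    by (simp add: distrib_left sum.distrib sum_distrib_left sum.swap[of _ V])
  also have "\<dots> \<le> p * real (card V) + (\<Sum>u\<in>V. 3 / 2 * (1 - p) ^ (k + 2))"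
    using assms(3) by (intro add_mono sum_mono expected_deficit_le)
      (auto simp: sum_bernoulli_weight_card finite_V)
  finally have "(\<Sum>A\<in>Pow V. bernoulli_weight V p A * (real (card A) + (\<Sum>u\<in>V. deficit k A u)))
      \<le> p * real (card V) + 3 / 2 * real (card V) * (1 - p) ^ (k + 2)" by simp
  moreover have "\<exists>A\<in>Pow V. real (card A) + (\<Sum>u\<in>V. deficit k A u)
      \<le> (\<Sum>A\<in>Pow V. bernoulli_weight V p A * (real (card A) + (\<Sum>u\<in>V. deficit k A u)))"
    using assms(1,2) finite_V
    by (intro exists_le_weighted_mean bernoulli_weight_nonneg sum_bernoulli_weight) auto
  ultimately show ?thesis by (blast intro: order_trans)
qed

lemma exp_dominating_completion:
  assumes "Suc k \<le> d" and "A \<subseteq> V"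
  shows "exp_dominating V E (A \<union> {u \<in> V. u \<notin> A \<and> local_weight k A u < 1})"
    (is "exp_dominating V E ?S")
proof -
  have "?S \<subseteq> V" using assms(2) by auto
  moreover have "1 \<le> weight_S V E ?S u" if "u \<in> V" for u
  proof (cases "u \<in> ?S")
    case True
    then show ?thesis
      using weight_S_ge_2_if_mem[of ?S u V E] that finite_subset[OF \<open>?S \<subseteq> V\<close> finite_V] by simp
  next
    case False
    then have "1 \<le> local_weight k A u" using that by auto
    also have "\<dots> \<le> local_weight k ?S u" by (rule local_weight_mono) auto
    also have "\<dots> \<le> weight_S V E ?S u"
      using False by (intro local_weight_le_weight_S assms(1) that \<open>?S \<subseteq> V\<close>)
    finally show ?thesis .
  qed
  ultimately show ?thesis unfolding exp_dominating_def by blast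
qed

lemma card_completion_le:
  assumes "A \<subseteq> V"
  shows "real (card (A \<union> {u \<in> V. u \<notin> A \<and> local_weight k A u < 1}))
      \<le> real (card A) + (\<Sum>u\<in>V. deficit k A u)"
proof -
  let ?B = "{u \<in> V. u \<notin> A \<and> local_weight k A u < 1}"
  have "real (card ?B) = (\<Sum>u\<in>?B. 1)" by simp
  also have "\<dots> \<le> (\<Sum>u\<in>?B. deficit k A u)"
    by (intro sum_mono) (simp add: deficit_def)
  also have "\<dots> \<le> (\<Sum>u\<in>V. deficit k A u)"
    by (intro sum_mono2 finite_V deficit_nonneg) auto
  finally show ?thesis using card_Un_le[of A ?B] by linarith
qed

lemma gamma_e_le:
  assumes "0 \<le> p" and "p \<le> 1" and "Suc k \<le> d"
  shows "real (gamma_e V E) \<le> p * real (card V) + 3 / 2 * real (card V) * (1 - p) ^ (k + 2)"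
proof -
  obtain A where "A \<subseteq> V" and A: "real (card A) + (\<Sum>u\<in>V. deficit k A u)
      \<le> p * real (card V) + 3 / 2 * real (card V) * (1 - p) ^ (k + 2)"
    using exists_cheap_set[OF assms] by blast
  have "gamma_e V E \<le> card (A \<union> {u \<in> V. u \<notin> A \<and> local_weight k A u < 1})"
    using gamma_e_le_card[OF finite_V exp_dominating_completion[OF assms(3) \<open>A \<subseteq> V\<close>]] .
  then show ?thesis using card_completion_le[OF \<open>A \<subseteq> V\<close>, of k] A by linarith
qed

end

theorem mainTheorem8:
  fixes V :: "'a set" and E :: "'a \<Rightarrow> 'a \<Rightarrow> bool" and d :: nat and p :: real
  assumes "simple_graph V E" and "cubic V E" and "girth_ge V E (2 * d + 1)"
    and "d \<ge> 1" and "0 \<le> p" and "p \<le> 1"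
  shows "real (gamma_e V E) \<le> 3 / 2 * (p + exp (- p * real d)) * real (card V)"
proof -
  interpret cubic_girth_graph V E d
    using assms(1-3) by unfold_locales
  have "(1 - p) ^ (d + 1) \<le> exp (- p * real d)"
    using power_decreasing[of d "d + 1" "1 - p"] one_minus_power_le_exp[OF assms(5,6), of d] assms(5,6)
    by simp
  have "real (gamma_e V E) \<le> p * real (card V) + 3 / 2 * real (card V) * (1 - p) ^ (d + 1)"
    using gamma_e_le[OF assms(5,6), of "d - 1"] assms(4) by simp
  also have "\<dots> \<le> 3 / 2 * p * real (card V) + 3 / 2 * real (card V) * exp (- p * real d)"
    using \<open>(1 - p) ^ (d + 1) \<le> exp (- p * real d)\<close> assms(5)
    by (intro add_mono mult_left_mono mult_right_mono) auto
  also have "\<dots> = 3 / 2 * (p + exp (- p * real d)) * real (card V)"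
    by (simp add: algebra_simps)
  finally show ?thesis .
qed

end
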